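(* Let $\mathbf z\in\mathbb{R}^{\rho(n_u+n_y)}$ be fixed, $\varphi:\mathbb{R}^{\rho(n_u+n_y)}\times\mathbb{R}^{n_uT}\to\mathbb{R}^{n_\varphi}$ a regression map, $Y\in\mathbb{R}^{n_yT\times N}$, $\Phi\in\mathbb{R}^{n_\varphi\times N}$ training data matrices, $\widehat\Theta\in\mathbb{R}^{n_yT\times n_\varphi}$, and define $\Sigma_\Delta=\frac1N(Y-\widehat\Theta\Phi)(Y-\widehat\Theta\Phi)^\top$ and $\Sigma_\varphi=\frac1N\Phi\Phi^\top$. Let $Q\in\mathbb{R}^{n_yT\times n_yT}$ and $R\in\mathbb{R}^{n_uT\times n_uT}$ be positive definite, $\bar{\mathbf y}\in\mathbb{R}^{n_yT}$, $\bar{\mathbf u}\in\mathbb{R}^{n_uT}$ references, $J(\mathbf u,\hat{\mathbf y})=\|\hat{\mathbf y}-\bar{\mathbf y}\|_Q^2+\|\mathbf u-\bar{\mathbf u}\|_R^2$, and $\lambda_1,\lambda_2\ge0$. Assume $\Sigma_\Delta$ and $\Sigma_\varphi$ are positive definite. Consider the unconstrained problem $$\min_{\mathbf u,\,\Delta\hat{\mathbf y}}\; J(\mathbf u,\hat{\mathbf y})+\frac{\lambda_1}{N}\|\varphi(\mathbf z,\mathbf u)\|^2_{\Sigma_\varphi^{-1}}+\frac{\lambda_2}{N}\|\Delta\hat{\mathbf y}\|^2_{\Sigma_\Delta^{-1}}\quad\text{s.t.}\quad \hat{\mathbf y}=\widehat\Theta\varphi(\mathbf z,\mathbf u)+\Delta\hat{\mathbf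 y}.$$ Then this problem gives the same optimal $\mathbf u$ as $$\min_{\mathbf u}\; \|\bar{\mathbf y}-\widehat\Theta\varphi(\mathbf z,\mathbf u)\|^2_{\widetilde Q}+\|\bar{\mathbf u}-\mathbf u\|_R^2+\frac{\lambda_1}{N}\|\varphi(\mathbf z,\mathbf u)\|^2_{\Sigma_\varphi^{-1}},$$ where $\widetilde Q=Q-Q\big(Q+\frac{\lambda_2}{N}\Sigma_\Delta^{-1}\big)^{-1}Q\preceq Q$.
   Context: For a vector $x$ and symmetric matrix $W$, $\|x\|_W^2=x^\top Wx$. $A\preceq B$ means $B-A$ is positive semidefinite. *)

theory Defs
  imports "HOL-Analysis.Analysis"
begin

definition wsq :: "real^'m^'m \<Rightarrow> real^'m \<Rightarrow> real" where
  "wsq W x = x \<bullet> (W *v x)"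

definition pos_def :: "real^'m^'m \<Rightarrow> bool" where
  "pos_def M \<longleftrightarrow> transpose M = M \<and> (\<forall>x. x \<noteq> 0 \<longrightarrow> 0 < x \<bullet> (M *v x))"

definition pos_semidef :: "real^'m^'m \<Rightarrow> bool" where
  "pos_semidef M \<longleftrightarrow> transpose M = M \<and> (\<forall>x. 0 \<le> x \<bullet> (M *v x))"

definition loewner_le :: "real^'m^'m \<Rightarrow> real^'m^'m \<Rightarrow> bool" where
  "loewner_le A B \<longleftrightarrow> pos_semidef (B - A)"

end

theory Submission
  imports Defs
begin

text \<open>
  Write \<open>e = \<Theta> \<phi>(z,u) - ybar\<close> and \<open>P = (\<lambda>\<^sub>2/N) \<Sigma>\<^sub>\<Delta>\<^sup>-\<^sup>1\<close>. Once the constraint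
  eliminates the predicted output, the joint objective depends on the correction \<open>d\<close> only
  through \<open>|e + d|\<^sub>Q\<^sup>2 + |d|\<^sub>P\<^sup>2\<close>. Completing the square with the positive definite
  \<open>M = Q + P\<close> turns this into \<open>|e|\<^sup>2\<close> weighted by \<open>Q - Q M\<^sup>-\<^sup>1 Q\<close> plus
  \<open>|d + M\<^sup>-\<^sup>1 Q e|\<^sub>M\<^sup>2\<close>, so minimising out \<open>d\<close> leaves exactly the reduced objective,
  and the two problems have the same minimising \<open>u\<close>. The gap \<open>Q M\<^sup>-\<^sup>1 Q\<close> between
  \<open>Q\<close> and the reduced weight is positive semidefinite, being congruent to \<open>M\<^sup>-\<^sup>1\<close>.
\<close>

lemma matrix_inv_right:
  fixes A :: "'a::semiring_1^'n^'m"
  assumes "invertible A"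
  shows "A ** matrix_inv A = mat 1"
  using someI_ex[OF assms[unfolded invertible_def]] unfolding matrix_inv_def by blast

lemma symmetric_matrix_inner_commute:
  fixes A :: "real^'n^'n"
  assumes "transpose A = A"
  shows "x \<bullet> (A *v y) = (A *v x) \<bullet> y"
  by (metis assms dot_lmul_matrix transpose_matrix_vector)

lemma symmetric_matrix_inv:
  fixes A :: "real^'n^'n"
  assumes "invertible A" and "transpose A = A"
  shows "transpose (matrix_inv A) = matrix_inv A"
proof -
  have "transpose (matrix_inv A) ** A = mat 1"
    by (metis assms matrix_inv_right matrix_transpose_mul transpose_mat)
  then have "transpose (matrix_inv A) ** (A ** matrix_inv A) = matrix_inv A"
    by (metis matrix_mul_assoc matrix_mul_lid)
  then show ?thesis
    by (simp add: matrix_inv_right[OF assms(1)])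
qed

lemma pos_def_imp_pos_semidef: "pos_def A \<Longrightarrow> pos_semidef A"
  unfolding pos_def_def pos_semidef_def by (metis inner_zero_left order.refl order.strict_implies_order)

lemma wsq_nonneg: "pos_semidef W \<Longrightarrow> 0 \<le> wsq W x"
  unfolding pos_semidef_def wsq_def by blast

lemma wsq_uminus: "wsq W (- x) = wsq W x"
  unfolding wsq_def by (simp add: linear_neg matrix_vector_mul_linear)

lemma wsq_minus_commute: "wsq W (a - b) = wsq W (b - a)"
  using wsq_uminus[of W "b - a"] by simp

lemma wsq_scaleR: "wsq (c *\<^sub>R W) x = c * wsq W x"
  unfolding wsq_def by (simp flip: scaleR_matrix_vector_assoc)

lemma pos_def_imp_invertible:
  fixes A :: "real^'n^'n"
  assumes "pos_def A"
  shows "invertible A"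
proof -
  have "\<forall>x. A *v x = 0 \<longrightarrow> x = 0"
    using assms unfolding pos_def_def by (metis inner_zero_right less_irrefl)
  then show ?thesis
    using matrix_left_invertible_ker(1) invertible_left_inverse by blast
qed

lemma pos_def_matrix_inv:
  fixes A :: "real^'n^'n"
  assumes "pos_def A"
  shows "pos_def (matrix_inv A)"
proof -
  have inv: "invertible A"
    using assms by (rule pos_def_imp_invertible)
  have sym: "transpose A = A"
    using assms unfolding pos_def_def by blast
  have "0 < x \<bullet> (matrix_inv A *v x)" if "x \<noteq> 0" for x
  proof -
    let ?y = "matrix_inv A *v x"
    have Ay: "A *v ?y = x"
      by (simp add: matrix_vector_mul_assoc matrix_inv_right[OF inv])
    then have "?y \<noteq> 0" using that by auto
    then have "0 < ?y \<bullet> (A *v ?y)" using assms pos_def_def by blast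
    then show ?thesis using Ay by (simp add: inner_commute)
  qed
  then show ?thesis
    unfolding pos_def_def using symmetric_matrix_inv[OF inv sym] by blast
qed

lemma pos_def_add_pos_semidef:
  fixes A B :: "real^'n^'n"
  assumes "pos_def A" and "pos_semidef B"
  shows "pos_def (A + B)"
proof -
  have "transpose (A + B) = transpose A + transpose B"
    by (simp add: transpose_def vec_eq_iff)
  with assms show ?thesis
    unfolding pos_def_def pos_semidef_def
    by (auto simp: matrix_vector_mult_add_rdistrib inner_add_right add_pos_nonneg)
qed

lemma pos_semidef_scaleR:
  fixes A :: "real^'n^'n"
  assumes "pos_semidef A" and "0 \<le> c"
  shows "pos_semidef (c *\<^sub>R A)"
  using assms unfolding pos_semidef_def
  by (simp add: transpose_scalar flip: scaleR_matrix_vector_assoc)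

lemma pos_semidef_congruence:
  fixes A :: "real^'m^'m" and B :: "real^'n^'m"
  assumes "pos_semidef A"
  shows "pos_semidef (transpose B ** A ** B)"
proof -
  have "x \<bullet> (transpose B *v y) = (B *v x) \<bullet> y" for x y
    by (metis dot_lmul_matrix inner_commute transpose_matrix_vector)
  then have "x \<bullet> ((transpose B ** A ** B) *v x) = (B *v x) \<bullet> (A *v (B *v x))" for x
    by (simp flip: matrix_vector_mul_assoc)
  moreover have "transpose (transpose B ** A ** B) = transpose B ** A ** B"
    using assms unfolding pos_semidef_def by (simp add: matrix_transpose_mul matrix_mul_assoc)
  ultimately show ?thesis
    using assms unfolding pos_semidef_def by simp
qed

lemma wsq_complete_square:
  fixes Q P :: "real^'n^'n"
  defines "M \<equiv> Q + P"
  assumes Q_sym: "transpose Q = Q" and M_inv: "invertible M" and M_sym: "transpose M = M"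
  shows "wsq Q (e + d) + wsq P d
           = wsq (Q - Q ** matrix_inv M ** Q) e + wsq M (d + matrix_inv M *v (Q *v e))"
proof -
  define a where "a = Q *v e"
  define w where "w = matrix_inv M *v a"
  have Mw: "M *v w = a"
    unfolding w_def by (simp add: matrix_vector_mul_assoc matrix_inv_right[OF M_inv])
  have "w \<bullet> (M *v d) = a \<bullet> d"
    using symmetric_matrix_inner_commute[OF M_sym] Mw by simp
  moreover have "e \<bullet> (Q *v d) = a \<bullet> d" and "e \<bullet> (Q *v w) = a \<bullet> w"
    using symmetric_matrix_inner_commute[OF Q_sym] a_def by simp_all
  moreover have "d \<bullet> (M *v d) = d \<bullet> (Q *v d) + d \<bullet> (P *v d)"
    unfolding M_def by (simp add: matrix_vector_mult_add_rdistrib inner_add_right)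
  ultimately have
    "wsq Q (e + d) + wsq P d = e \<bullet> a + 2 * (a \<bullet> d) + d \<bullet> (M *v d)"
    "wsq (Q - Q ** matrix_inv M ** Q) e = e \<bullet> a - a \<bullet> w"
    "wsq M (d + w) = d \<bullet> (M *v d) + 2 * (a \<bullet> d) + a \<bullet> w"
    unfolding wsq_def a_def w_def using Mw[unfolded w_def a_def]
    by (simp_all add: matrix_vector_right_distrib matrix_vector_mult_diff_rdistrib
        inner_add_left inner_add_right inner_diff_right inner_commute
        flip: matrix_vector_mul_assoc)
  then show ?thesis unfolding w_def a_def by simp
qed

lemma wsq_partial_minimum:
  fixes Q P :: "real^'n^'n"
  assumes "pos_def Q" and "pos_semidef P"
  shows "wsq (Q - Q ** matrix_inv (Q + P) ** Q) e \<le> wsq Q (e + d) + wsq P d"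
    and "\<exists>d. wsq Q (e + d) + wsq P d = wsq (Q - Q ** matrix_inv (Q + P) ** Q) e"
proof -
  have M: "pos_def (Q + P)"
    using assms by (rule pos_def_add_pos_semidef)
  have "wsq Q (e + d) + wsq P d
      = wsq (Q - Q ** matrix_inv (Q + P) ** Q) e + wsq (Q + P) (d + matrix_inv (Q + P) *v (Q *v e))"
    for d
    using assms(1) M pos_def_imp_invertible[OF M]
    unfolding pos_def_def by (intro wsq_complete_square) auto
  moreover have "0 \<le> wsq (Q + P) x" for x
    using M by (intro wsq_nonneg pos_def_imp_pos_semidef)
  ultimately show "wsq (Q - Q ** matrix_inv (Q + P) ** Q) e \<le> wsq Q (e + d) + wsq P d"
    and "\<exists>d. wsq Q (e + d) + wsq P d = wsq (Q - Q ** matrix_inv (Q + P) ** Q) e"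
    by (auto simp: wsq_def intro!: exI[of _ "- (matrix_inv (Q + P) *v (Q *v e))"])
qed

lemma loewner_le_schur_complement:
  fixes Q P :: "real^'n^'n"
  assumes "pos_def Q" and "pos_semidef P"
  shows "loewner_le (Q - Q ** matrix_inv (Q + P) ** Q) Q"
proof -
  have "Q - (Q - Q ** matrix_inv (Q + P) ** Q) = transpose Q ** matrix_inv (Q + P) ** Q"
    using assms(1) unfolding pos_def_def by simp
  moreover have "pos_semidef (transpose Q ** matrix_inv (Q + P) ** Q)"
    using pos_def_add_pos_semidef[OF assms]
    by (intro pos_semidef_congruence pos_def_imp_pos_semidef pos_def_matrix_inv)
  ultimately show ?thesis
    unfolding loewner_le_def by simp
qed

lemma joint_argmin_iff_reduced_argmin:
  fixes F :: "'a \<Rightarrow> 'b \<Rightarrow> 'c::preorder"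
  assumes lower: "\<And>u v. G u \<le> F u v" and attained: "\<And>u. \<exists>v. F u v = G u"
  shows "(\<exists>v. \<forall>u' v'. F u v \<le> F u' v') \<longleftrightarrow> (\<forall>u'. G u \<le> G u')"
proof
  assume "\<exists>v. \<forall>u' v'. F u v \<le> F u' v'"
  then obtain v where v: "\<forall>u' v'. F u v \<le> F u' v'" ..
  show "\<forall>u'. G u \<le> G u'"
  proof
    fix u'
    obtain v' where v': "F u' v' = G u'" using attained ..
    have "G u \<le> F u v" by (rule lower)
    also have "\<dots> \<le> F u' v'" using v by blast
    also have "\<dots> = G u'" by (rule v')
    finally show "G u \<le> G u'" .
  qed
next
  assume G_min: "\<forall>u'. G u \<le> G u'"
  obtain v where v: "F u v = G u" using attained ..
  have "F u v \<le> F u' v'" for u' v'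
  proof -
    have "F u v \<le> G u'" using v G_min by simp
    also have "\<dots> \<le> F u' v'" by (rule lower)
    finally show ?thesis .
  qed
  then show "\<exists>v. \<forall>u' v'. F u v \<le> F u' v'" by blast
qed

theorem corollary1:
  fixes z :: "real^'z"
    and \<phi> :: "real^'z \<Rightarrow> real^'u \<Rightarrow> real^'p"
    and Y :: "real^'n^'y"
    and \<Phi> :: "real^'n^'p"
    and \<Theta> :: "real^'p^'y"
    and Q :: "real^'y^'y"
    and R :: "real^'u^'u"
    and ybar :: "real^'y"
    and ubar :: "real^'u"
    and lam1 lam2 :: real
    and \<Sigma>\<Delta> :: "real^'y^'y"
    and \<Sigma>\<phi> :: "real^'p^'p"
  defines "N \<equiv> real CARD('n)"
  defines "\<Sigma>\<Delta> \<equiv> (1 / N) *\<^sub>R ((Y - \<Theta> ** \<Phi>) ** transpose (Y - \<Theta> ** \<Phi>))"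
  defines "\<Sigma>\<phi> \<equiv> (1 / N) *\<^sub>R (\<Phi> ** transpose \<Phi>)"
  defines "J \<equiv> (\<lambda>(u::real^'u) (yh::real^'y). wsq Q (yh - ybar) + wsq R (u - ubar))"
  defines "F \<equiv> (\<lambda>u (dy::real^'y). J u (\<Theta> *v \<phi> z u + dy)
                 + lam1 / N * wsq (matrix_inv \<Sigma>\<phi>) (\<phi> z u)
                 + lam2 / N * wsq (matrix_inv \<Sigma>\<Delta>) dy)"
  defines "Qt \<equiv> Q - Q ** matrix_inv (Q + (lam2 / N) *\<^sub>R matrix_inv \<Sigma>\<Delta>) ** Q"
  defines "G \<equiv> (\<lambda>u. wsq Qt (ybar - \<Theta> *v \<phi> z u) + wsq R (ubar - u)
                 + lam1 / N * wsq (matrix_inv \<Sigma>\<phi>) (\<phi> z u))"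
  assumes "pos_def Q" and "pos_def R"
    and "lam1 \<ge> 0" and "lam2 \<ge> 0"
    and "pos_def \<Sigma>\<Delta>" and "pos_def \<Sigma>\<phi>"
  shows "(\<forall>u. (\<exists>dy. \<forall>u' dy'. F u dy \<le> F u' dy') \<longleftrightarrow> (\<forall>u'. G u \<le> G u'))
         \<and> loewner_le Qt Q"
proof -
  define P where "P = (lam2 / N) *\<^sub>R matrix_inv \<Sigma>\<Delta>"
  define e where "e u = \<Theta> *v \<phi> z u - ybar" for u
  define H where "H u = wsq R (u - ubar) + lam1 / N * wsq (matrix_inv \<Sigma>\<phi>) (\<phi> z u)" for u
  have "0 \<le> lam2 / N"
    unfolding N_def using \<open>lam2 \<ge> 0\<close> by simp
  then have P: "pos_semidef P"
    unfolding P_def using \<open>pos_def \<Sigma>\<Delta>\<close>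
    by (intro pos_semidef_scaleR pos_def_imp_pos_semidef pos_def_matrix_inv)
  have Qt_P: "Qt = Q - Q ** matrix_inv (Q + P) ** Q"
    unfolding Qt_def P_def ..
  have F_eq: "F u dy = wsq Q (e u + dy) + wsq P dy + H u" for u dy
    unfolding F_def J_def e_def H_def P_def by (simp add: wsq_scaleR algebra_simps)
  have G_eq: "G u = wsq Qt (e u) + H u" for u
    unfolding G_def e_def H_def by (simp add: wsq_minus_commute[of _ ybar] wsq_minus_commute[of _ ubar])
  have "G u \<le> F u dy" for u dy
    unfolding F_eq G_eq Qt_P using wsq_partial_minimum(1)[OF \<open>pos_def Q\<close> P] by simp
  moreover have "\<exists>dy. F u dy = G u" for u
    unfolding F_eq G_eq Qt_P using wsq_partial_minimum(2)[OF \<open>pos_def Q\<close> P, of "e u"] by auto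
  ultimately have "\<forall>u. (\<exists>dy. \<forall>u' dy'. F u dy \<le> F u' dy') \<longleftrightarrow> (\<forall>u'. G u \<le> G u')"
    by (intro allI joint_argmin_iff_reduced_argmin)
  moreover have "loewner_le Qt Q"
    unfolding Qt_P using \<open>pos_def Q\<close> P by (rule loewner_le_schur_complement)
  ultimately show ?thesis ..
qed

end
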